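(* If $p_1,\dots,p_n\in\mathrm{ESPR}$, then there exists $h\in\mathrm{PR}\cap\mathscr{A}_0$ such that $p_1,\dots,p_n\in\mathcal{P}_h$.
   Context: $\mathscr{H}_\infty$: functions analytic and bounded on $\mathrm{Re}(s)>0$; $\mathscr{A}_0$: those in $\mathscr{H}_\infty$ extending continuously to $j\mathbb{R}\cup\{\infty\}$. $g\in\mathrm{PR}$ if $g$ is analytic in $\mathrm{Re}(s)>0$, real for positive real $s$, and $\mathrm{Re}(g(s))\ge0$ for $\mathrm{Re}(s)>0$; $g\in\mathrm{ESPR}$ if moreover $g\in\mathscr{A}_0$ and $g-\epsilon\in\mathrm{PR}$ for some $\epsilon>0$. $\mathcal{P}_h:=\{p\in\mathscr{H}_\infty: p(0)\ne0,\ h(s)(1+p(s)/s)\in\mathrm{ESPR}\}$. *)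

theory Defs
  imports "HOL-Analysis.Analysis"
begin

definition RHP :: "complex set" where
  "RHP = {s. Re s > 0}"

definition CRHP :: "complex set" where
  "CRHP = {s. Re s \<ge> 0}"

definition Hinf :: "(complex \<Rightarrow> complex) \<Rightarrow> bool" where
  "Hinf f \<longleftrightarrow> f holomorphic_on RHP \<and> bounded (f ` RHP)"

text \<open>A_0: H-infinity functions that extend continuously to the imaginary axis
  and the point at infinity, i.e. there is a continuous extension to the closed
  right half-plane which has a limit at infinity.\<close>
definition A0 :: "(complex \<Rightarrow> complex) \<Rightarrow> bool" where
  "A0 f \<longleftrightarrow> Hinf f \<and>
     (\<exists>g. continuous_on CRHP g \<and> (\<forall>s\<in>RHP. g s = f s) \<and>
          (\<exists>L. (g \<longlongrightarrow> L) (inf at_infinity (principal CRHP))))"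

definition PR :: "(complex \<Rightarrow> complex) \<Rightarrow> bool" where
  "PR g \<longleftrightarrow> g holomorphic_on RHP \<and>
     (\<forall>x::real. x > 0 \<longrightarrow> g (complex_of_real x) \<in> \<real>) \<and>
     (\<forall>s\<in>RHP. Re (g s) \<ge> 0)"

definition ESPR :: "(complex \<Rightarrow> complex) \<Rightarrow> bool" where
  "ESPR g \<longleftrightarrow> A0 g \<and> (\<exists>\<epsilon>::real. \<epsilon> > 0 \<and> PR (\<lambda>s. g s - complex_of_real \<epsilon>))"

text \<open>The class P_h. The value p(0) is read as the boundary value of p at 0,
  i.e. the limit of p(s) as s tends to 0 within the open right half-plane.\<close>
definition Pclass :: "(complex \<Rightarrow> complex) \<Rightarrow> (complex \<Rightarrow> complex) set" where
  "Pclass h = {p. Hinf p \<and>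
     (\<exists>c. (p \<longlongrightarrow> c) (at 0 within RHP) \<and> c \<noteq> 0) \<and>
     ESPR (\<lambda>s. h s * (1 + p s / s))}"

end

theory Submission
  imports Defs
begin

text \<open>Take \<open>h(s) = s/(s + a)\<close> with a large real \<open>a\<close>. Then \<open>h(s)(1 + p(s)/s) = (s + p(s))/(s + a)\<close>,
  and if \<open>Re p \<ge> \<epsilon> > 0\<close> and \<open>|p| \<le> M\<close> on the right half-plane, the real part of this quotient
  stays above \<open>min (1/2) (\<epsilon>/(2a))\<close> as soon as \<open>a \<epsilon> \<ge> M\<^sup>2\<close>: the cross term \<open>Im s Im p\<close> is
  absorbed by \<open>(Im s)\<^sup>2/2 + M\<^sup>2/2\<close>. Each \<open>p\<^sub>i\<close> thus works for all large \<open>a\<close>, hence finitely many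
  of them work for a common \<open>a\<close>.\<close>

definition highpass :: "real \<Rightarrow> complex \<Rightarrow> complex" where
  "highpass a s = s / (s + complex_of_real a)"

lemma RHP_subset_CRHP: "RHP \<subseteq> CRHP"
  unfolding RHP_def CRHP_def by auto

lemma of_real_in_RHP_iff [simp]: "complex_of_real x \<in> RHP \<longleftrightarrow> 0 < x"
  by (simp add: RHP_def)

lemma zero_islimpt_RHP: "0 islimpt RHP"
  unfolding islimpt_approachable
proof (intro allI impI)
  fix e :: real
  assume "0 < e"
  then show "\<exists>s\<in>RHP. s \<noteq> 0 \<and> dist s 0 < e"
    by (intro bexI[of _ "complex_of_real (e / 2)"]) (auto simp: RHP_def)
qed

lemma add_of_real_neq_0_CRHP: "s \<in> CRHP \<Longrightarrow> 0 < a \<Longrightarrow> s + complex_of_real a \<noteq> 0"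
  by (auto simp: CRHP_def complex_eq_iff)

lemma bounded_mult_image:
  fixes f g :: "'a \<Rightarrow> 'b::real_normed_algebra"
  assumes "bounded (f ` S)" "bounded (g ` S)"
  shows "bounded ((\<lambda>x. f x * g x) ` S)"
proof -
  obtain B where B: "0 < B" "\<forall>x\<in>S. norm (f x) \<le> B"
    using assms(1) unfolding bounded_pos by blast
  obtain C where C: "0 < C" "\<forall>x\<in>S. norm (g x) \<le> C"
    using assms(2) unfolding bounded_pos by blast
  have "norm (f x * g x) \<le> B * C" if "x \<in> S" for x
  proof -
    have "norm (f x * g x) \<le> norm (f x) * norm (g x)"
      by (rule norm_mult_ineq)
    also have "\<dots> \<le> B * C"
      using B C that by (intro mult_mono) auto
    finally show ?thesis .
  qed
  then show ?thesis
    unfolding bounded_iff by blast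
qed

lemma A0I:
  assumes "f holomorphic_on RHP" "bounded (f ` RHP)"
    and "continuous_on CRHP F" "\<forall>s\<in>RHP. F s = f s"
    and "(F \<longlongrightarrow> L) (inf at_infinity (principal CRHP))"
  shows "A0 f"
  using assms unfolding A0_def Hinf_def by blast

lemma A0E:
  assumes "A0 f"
  obtains F L where "f holomorphic_on RHP" "bounded (f ` RHP)"
    and "continuous_on CRHP F" "\<forall>s\<in>RHP. F s = f s"
    and "(F \<longlongrightarrow> L) (inf at_infinity (principal CRHP))"
  using assms unfolding A0_def Hinf_def by blast

lemma A0_cong:
  assumes "A0 f" and eq: "\<And>s. s \<in> RHP \<Longrightarrow> f s = g s"
  shows "A0 g"
proof -
  obtain F L where f: "f holomorphic_on RHP" "bounded (f ` RHP)" "continuous_on CRHP F"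
    "\<forall>s\<in>RHP. F s = f s" "(F \<longlongrightarrow> L) (inf at_infinity (principal CRHP))"
    using assms(1) by (rule A0E)
  show ?thesis
  proof (rule A0I[where F = F and L = L])
    show "g holomorphic_on RHP"
      using f(1) eq by (rule holomorphic_transform)
    have "g ` RHP = f ` RHP"
      using eq by (auto simp: image_def)
    then show "bounded (g ` RHP)"
      using f(2) by simp
    show "\<forall>s\<in>RHP. F s = g s"
      using f(4) eq by simp
  qed (use f in auto)
qed

lemma A0_const: "A0 (\<lambda>s. c)"
proof (rule A0I[where F = "\<lambda>s. c" and L = c])
  show "bounded ((\<lambda>s. c) ` RHP)"
    unfolding bounded_iff by (intro exI[of _ "norm c"]) auto
qed auto

lemma A0_add:
  assumes "A0 f" "A0 g"
  shows "A0 (\<lambda>s. f s + g s)"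
proof -
  obtain F L where f: "f holomorphic_on RHP" "bounded (f ` RHP)" "continuous_on CRHP F"
    "\<forall>s\<in>RHP. F s = f s" "(F \<longlongrightarrow> L) (inf at_infinity (principal CRHP))"
    using assms(1) by (rule A0E)
  obtain G K where g: "g holomorphic_on RHP" "bounded (g ` RHP)" "continuous_on CRHP G"
    "\<forall>s\<in>RHP. G s = g s" "(G \<longlongrightarrow> K) (inf at_infinity (principal CRHP))"
    using assms(2) by (rule A0E)
  show ?thesis
  proof (rule A0I[where F = "\<lambda>s. F s + G s" and L = "L + K"])
    show "(\<lambda>s. f s + g s) holomorphic_on RHP"
      using f(1) g(1) by (rule holomorphic_on_add)
    show "bounded ((\<lambda>s. f s + g s) ` RHP)"
      using f(2) g(2) by (rule bounded_plus_comp)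
    show "continuous_on CRHP (\<lambda>s. F s + G s)"
      using f(3) g(3) by (rule continuous_on_add)
    show "\<forall>s\<in>RHP. F s + G s = f s + g s"
      using f(4) g(4) by simp
    show "((\<lambda>s. F s + G s) \<longlongrightarrow> L + K) (inf at_infinity (principal CRHP))"
      using f(5) g(5) by (rule tendsto_add)
  qed
qed

lemma A0_mult:
  assumes "A0 f" "A0 g"
  shows "A0 (\<lambda>s. f s * g s)"
proof -
  obtain F L where f: "f holomorphic_on RHP" "bounded (f ` RHP)" "continuous_on CRHP F"
    "\<forall>s\<in>RHP. F s = f s" "(F \<longlongrightarrow> L) (inf at_infinity (principal CRHP))"
    using assms(1) by (rule A0E)
  obtain G K where g: "g holomorphic_on RHP" "bounded (g ` RHP)" "continuous_on CRHP G"
    "\<forall>s\<in>RHP. G s = g s" "(G \<longlongrightarrow> K) (inf at_infinity (principal CRHP))"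
    using assms(2) by (rule A0E)
  show ?thesis
  proof (rule A0I[where F = "\<lambda>s. F s * G s" and L = "L * K"])
    show "(\<lambda>s. f s * g s) holomorphic_on RHP"
      using f(1) g(1) by (rule holomorphic_on_mult)
    show "bounded ((\<lambda>s. f s * g s) ` RHP)"
      using f(2) g(2) by (rule bounded_mult_image)
    show "continuous_on CRHP (\<lambda>s. F s * G s)"
      using f(3) g(3) by (rule continuous_on_mult)
    show "\<forall>s\<in>RHP. F s * G s = f s * g s"
      using f(4) g(4) by simp
    show "((\<lambda>s. F s * G s) \<longlongrightarrow> L * K) (inf at_infinity (principal CRHP))"
      using f(5) g(5) by (rule tendsto_mult)
  qed
qed

lemma A0_inverse_shift:
  assumes "0 < a"
  shows "A0 (\<lambda>s. 1 / (s + complex_of_real a))"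
proof (rule A0I[where F = "\<lambda>s. 1 / (s + complex_of_real a)" and L = 0])
  have nz: "s + complex_of_real a \<noteq> 0" if "s \<in> CRHP" for s
    using that assms by (rule add_of_real_neq_0_CRHP)
  then show "(\<lambda>s. 1 / (s + complex_of_real a)) holomorphic_on RHP"
    using RHP_subset_CRHP by (auto intro!: holomorphic_intros)
  show "continuous_on CRHP (\<lambda>s. 1 / (s + complex_of_real a))"
    using nz by (auto intro!: continuous_intros)
  have "norm (1 / (s + complex_of_real a)) \<le> 1 / a" if "s \<in> RHP" for s
  proof -
    have "a \<le> Re (s + complex_of_real a)"
      using that by (simp add: RHP_def)
    also have "\<dots> \<le> norm (s + complex_of_real a)"
      by (rule complex_Re_le_cmod)
    finally show ?thesis
      using assms by (simp add: norm_divide divide_simps)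
  qed
  then show "bounded ((\<lambda>s. 1 / (s + complex_of_real a)) ` RHP)"
    unfolding bounded_iff by blast
  have "filterlim (\<lambda>s. s) at_infinity (inf at_infinity (principal CRHP))"
    by (simp add: filterlim_def filtermap_ident)
  then have "filterlim (\<lambda>s. s + complex_of_real a) at_infinity (inf at_infinity (principal CRHP))"
    by (rule tendsto_add_filterlim_at_infinity'[OF _ tendsto_const])
  then show "((\<lambda>s. 1 / (s + complex_of_real a)) \<longlongrightarrow> 0) (inf at_infinity (principal CRHP))"
    by (rule tendsto_divide_0[OF tendsto_const])
qed simp

lemma A0_highpass:
  assumes "0 < a"
  shows "A0 (highpass a)"
proof (rule A0_cong)
  show "A0 (\<lambda>s. 1 + (- complex_of_real a) * (1 / (s + complex_of_real a)))"
    using assms by (intro A0_add A0_mult A0_const A0_inverse_shift)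
  fix s
  assume "s \<in> RHP"
  then have "s + complex_of_real a \<noteq> 0"
    using assms RHP_subset_CRHP add_of_real_neq_0_CRHP by blast
  then show "1 + (- complex_of_real a) * (1 / (s + complex_of_real a)) = highpass a s"
    by (simp add: highpass_def field_simps)
qed

lemma shift_quotient_numerator_ge:
  fixes x y u v e M a d :: real
  assumes "0 < x" "e \<le> u" "u^2 + v^2 \<le> M^2" "0 < a" "M^2 \<le> a * e" "d \<le> 1/2" "2 * d * a \<le> e"
  shows "d * ((x + a)^2 + y^2) \<le> (x + u) * (x + a) + (y + v) * y"
proof -
  have "0 \<le> e"
    using assms by (smt (verit) zero_le_power2 zero_le_mult_iff)
  have "(x + u) * (x + a) + (y + v) * y = x^2 + a * x + u * x + a * u + y^2 + v * y"
    by (simp add: power2_eq_square algebra_simps)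
  moreover have "d * ((x + a)^2 + y^2) = d * x^2 + (2 * d) * (a * x) + a * (2 * d * a) / 2 + d * y^2"
    by (simp add: power2_eq_square algebra_simps)
  moreover have "0 \<le> y^2 + 2 * (v * y) + v^2"
    using zero_le_power2[of "y + v"] by (simp add: power2_eq_square algebra_simps)
  moreover have "0 \<le> u * x"
    using assms \<open>0 \<le> e\<close> by simp
  moreover have "a * e \<le> a * u"
    using assms by simp
  moreover have "a * (2 * d * a) \<le> a * e"
    using assms by (intro mult_left_mono) auto
  moreover have "(2 * d) * (a * x) \<le> 1 * (a * x)"
    using assms by (intro mult_right_mono) auto
  moreover have "d * x^2 \<le> 1 * x^2" "(2 * d) * y^2 \<le> 1 * y^2"
    using assms by (intro mult_right_mono; simp)+
  moreover have "0 \<le> u^2"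
    by simp
  ultimately show ?thesis
    using assms(3,5) by linarith
qed

lemma Re_quotient_shift_ge:
  fixes s q :: complex
  assumes "0 < Re s" "e \<le> Re q" "norm q \<le> M" "0 < a" "M^2 \<le> a * e" "d \<le> 1/2" "2 * d * a \<le> e"
  shows "d \<le> Re ((s + q) / (s + complex_of_real a))"
proof -
  have "(Re q)^2 + (Im q)^2 \<le> M^2"
    using power_mono[OF assms(3) norm_ge_zero, of 2] by (simp add: cmod_power2)
  then have "d * ((Re s + a)^2 + (Im s)^2) \<le> (Re s + Re q) * (Re s + a) + (Im s + Im q) * Im s"
    using assms by (intro shift_quotient_numerator_ge) auto
  moreover have "0 < (Re s + a)^2 + (Im s)^2"
    using assms by (simp add: add_pos_nonneg)
  ultimately show ?thesis
    by (simp add: Re_divide pos_le_divide_eq)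
qed

lemma PR_highpass:
  assumes "0 < a"
  shows "PR (highpass a)"
  unfolding PR_def
proof (intro conjI allI impI ballI)
  show "highpass a holomorphic_on RHP"
    using A0_highpass[OF assms] by (auto simp: A0_def Hinf_def)
  show "highpass a (complex_of_real x) \<in> \<real>" for x
    by (simp add: highpass_def)
  show "0 \<le> Re (highpass a s)" if "s \<in> RHP" for s
    using Re_quotient_shift_ge[of s 0 0 0 a 0] that assms by (simp add: highpass_def RHP_def)
qed

lemma PR_cong:
  assumes "PR f" and eq: "\<And>s. s \<in> RHP \<Longrightarrow> f s = g s"
  shows "PR g"
  using assms holomorphic_cong[of RHP RHP f g] unfolding PR_def by auto

lemma ESPR_cong:
  assumes "ESPR f" and eq: "\<And>s. s \<in> RHP \<Longrightarrow> f s = g s"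
  shows "ESPR g"
  using assms A0_cong PR_cong[of "\<lambda>s. f s - _" "\<lambda>s. g s - _"] unfolding ESPR_def by metis

lemma ESPR_real:
  assumes "ESPR p" "0 < x"
  shows "p (complex_of_real x) \<in> \<real>"
proof -
  obtain \<epsilon> where "PR (\<lambda>s. p s - complex_of_real \<epsilon>)"
    using assms(1) unfolding ESPR_def by blast
  then have "p (complex_of_real x) - complex_of_real \<epsilon> \<in> \<real>"
    using assms(2) unfolding PR_def by blast
  then have "p (complex_of_real x) - complex_of_real \<epsilon> + complex_of_real \<epsilon> \<in> \<real>"
    by (intro Reals_add) auto
  then show ?thesis
    by simp
qed

lemma ESPR_Re_lower_bound:
  assumes "ESPR p"
  obtains \<epsilon> where "0 < \<epsilon>" "\<forall>s\<in>RHP. \<epsilon> \<le> Re (p s)"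
  using assms unfolding ESPR_def PR_def by force

lemma A0_boundary_limit:
  assumes "A0 f" "z \<in> CRHP"
  shows "\<exists>c. (f \<longlongrightarrow> c) (at z within RHP)"
proof -
  obtain F where F: "continuous_on CRHP F" "\<forall>s\<in>RHP. F s = f s"
    using assms(1) by (rule A0E)
  have "(F \<longlongrightarrow> F z) (at z within CRHP)"
    using F(1) assms(2) unfolding continuous_on_def by blast
  then have "(F \<longlongrightarrow> F z) (at z within RHP)"
    by (rule tendsto_within_subset[OF _ RHP_subset_CRHP])
  moreover have "\<forall>\<^sub>F s in at z within RHP. F s = f s"
    using F(2) by (auto simp: eventually_at_filter)
  ultimately show ?thesis
    using tendsto_cong by blast
qed

lemma ESPR_boundary_limit_0:
  assumes "ESPR p"
  obtains c where "(p \<longlongrightarrow> c) (at 0 within RHP)" "c \<noteq> 0"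
proof -
  obtain c where lim: "(p \<longlongrightarrow> c) (at 0 within RHP)"
    using assms A0_boundary_limit[of p 0] by (auto simp: ESPR_def CRHP_def)
  obtain \<epsilon> where \<epsilon>: "0 < \<epsilon>" "\<forall>s\<in>RHP. \<epsilon> \<le> Re (p s)"
    using assms by (rule ESPR_Re_lower_bound)
  have "at (0::complex) within RHP \<noteq> bot"
    using zero_islimpt_RHP trivial_limit_within by blast
  moreover have "\<forall>\<^sub>F s in at 0 within RHP. \<epsilon> \<le> Re (p s)"
    using \<epsilon>(2) by (auto simp: eventually_at_filter)
  ultimately have "\<epsilon> \<le> Re c"
    using tendsto_lowerbound[OF tendsto_Re[OF lim]] by blast
  with \<epsilon>(1) have "c \<noteq> 0"
    by auto
  with lim show ?thesis
    by (rule that)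
qed

lemma A0_shift_quotient:
  assumes "A0 p" "0 < a"
  shows "A0 (\<lambda>s. (s + p s) / (s + complex_of_real a))"
proof (rule A0_cong)
  show "A0 (\<lambda>s. highpass a s + p s * (1 / (s + complex_of_real a)))"
    using assms by (intro A0_add A0_mult A0_highpass A0_inverse_shift)
qed (simp add: highpass_def add_divide_distrib)

lemma ESPR_shift_quotient:
  assumes "ESPR p" "0 < \<epsilon>" "\<forall>s\<in>RHP. \<epsilon> \<le> Re (p s)" "\<forall>s\<in>RHP. norm (p s) \<le> M"
    and "0 < a" "M^2 \<le> a * \<epsilon>"
  shows "ESPR (\<lambda>s. (s + p s) / (s + complex_of_real a))"
proof -
  define q where "q s = (s + p s) / (s + complex_of_real a)" for s
  define d where "d = min (1/2) (\<epsilon> / (2 * a))"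
  have "A0 q"
    unfolding q_def using assms(1,5) by (intro A0_shift_quotient) (simp add: ESPR_def)
  have "PR (\<lambda>s. q s - complex_of_real d)"
    unfolding PR_def
  proof (intro conjI allI impI ballI)
    show "(\<lambda>s. q s - complex_of_real d) holomorphic_on RHP"
      using \<open>A0 q\<close> by (auto simp: A0_def Hinf_def intro!: holomorphic_intros)
    show "q (complex_of_real x) - complex_of_real d \<in> \<real>" if "0 < x" for x
      using ESPR_real[OF assms(1) that] by (simp add: q_def)
    show "0 \<le> Re (q s - complex_of_real d)" if "s \<in> RHP" for s
    proof -
      have "2 * d * a \<le> \<epsilon>"
        using assms(5) by (simp add: d_def min_def field_simps)
      then have "d \<le> Re (q s)"
        unfolding q_def using that assms by (intro Re_quotient_shift_ge) (auto simp: d_def RHP_def)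
      then show ?thesis
        by simp
    qed
  qed
  moreover have "0 < d"
    using assms(2,5) by (simp add: d_def)
  ultimately show ?thesis
    using \<open>A0 q\<close> unfolding ESPR_def q_def by blast
qed

lemma ESPR_eventually_shift_quotient:
  assumes "ESPR p"
  shows "\<forall>\<^sub>F a in at_top. ESPR (\<lambda>s. (s + p s) / (s + complex_of_real a))"
proof -
  obtain \<epsilon> where \<epsilon>: "0 < \<epsilon>" "\<forall>s\<in>RHP. \<epsilon> \<le> Re (p s)"
    using assms by (rule ESPR_Re_lower_bound)
  obtain M where M: "\<forall>s\<in>RHP. norm (p s) \<le> M"
    using assms unfolding ESPR_def A0_def Hinf_def bounded_iff by blast
  have "\<forall>\<^sub>F a in at_top. 0 < a \<and> M^2 / \<epsilon> \<le> a"
    by (intro eventually_conj eventually_gt_at_top eventually_ge_at_top)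
  then show ?thesis
  proof (rule eventually_mono)
    fix a
    assume "0 < a \<and> M^2 / \<epsilon> \<le> a"
    then show "ESPR (\<lambda>s. (s + p s) / (s + complex_of_real a))"
      using assms \<epsilon> M by (intro ESPR_shift_quotient) (auto simp: pos_divide_le_eq mult.commute)
  qed
qed

lemma highpass_mult_eq:
  assumes "s \<noteq> 0"
  shows "highpass a s * (1 + w / s) = (s + w) / (s + complex_of_real a)"
proof -
  have "1 + w / s = (s + w) / s"
    using assms by (simp add: field_simps)
  with assms show ?thesis
    by (simp add: highpass_def)
qed

lemma ESPR_eventually_Pclass_highpass:
  assumes "ESPR p"
  shows "\<forall>\<^sub>F a in at_top. p \<in> Pclass (highpass a)"
proof -
  obtain c where "(p \<longlongrightarrow> c) (at 0 within RHP)" "c \<noteq> 0"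
    using assms by (rule ESPR_boundary_limit_0)
  moreover have "Hinf p"
    using assms by (simp add: ESPR_def A0_def)
  moreover have "ESPR (\<lambda>s. highpass a s * (1 + p s / s))"
    if "ESPR (\<lambda>s. (s + p s) / (s + complex_of_real a))" for a
    using that by (rule ESPR_cong) (rule highpass_mult_eq[symmetric], auto simp: RHP_def)
  ultimately show ?thesis
    using ESPR_eventually_shift_quotient[OF assms] unfolding Pclass_def
    by (auto elim: eventually_mono)
qed

theorem lemma6:
  fixes n :: nat and p :: "nat \<Rightarrow> complex \<Rightarrow> complex"
  assumes "\<forall>i\<in>{1..n}. ESPR (p i)"
  shows "\<exists>h. PR h \<and> A0 h \<and> (\<forall>i\<in>{1..n}. p i \<in> Pclass h)"
proof -
  have "\<forall>\<^sub>F a in at_top. 0 < a \<and> (\<forall>i\<in>{1..n}. p i \<in> Pclass (highpass a))"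
    using assms ESPR_eventually_Pclass_highpass
    by (intro eventually_conj eventually_gt_at_top eventually_ball_finite) auto
  then obtain a where "0 < a" "\<forall>i\<in>{1..n}. p i \<in> Pclass (highpass a)"
    using eventually_happens' trivial_limit_at_top_linorder by blast
  then show ?thesis
    using PR_highpass A0_highpass by blast
qed

end
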